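(* Let $(V,\langle\cdot,\cdot\rangle)$ be a Hilbert space and $Q\subset V$ a set of points with $M_Q:=\sup\{\|\mathbf v\|:\mathbf v\in Q\}<\infty$ and $-Q=Q$. Let $\epsilon>0$, and let $f:V\to\mathbb R^k$ be a linear map satisfying $$(1-\epsilon)\|\mathbf v_1-\mathbf v_2\|^2\le\|f(\mathbf v_1)-f(\mathbf v_2)\|^2\le(1+\epsilon)\|\mathbf v_1-\mathbf v_2\|^2\quad\text{for all }\mathbf v_1,\mathbf v_2\in Q,$$ where the norm on $\mathbb R^k$ is induced by a fixed inner product, and let $f^*:\mathbb R^k\to V$ be the adjoint with respect to these inner products. Then for all $\mathbf w_1,\mathbf w_2\in\mathrm{span}\{Q\}$, $$|\langle\mathbf w_1,(\mathbb I_V-f^*\circ f)(\mathbf w_2)\rangle|\le\epsilon M_Q^2\|\mathbf w_1\|_Q\|\mathbf w_2\|_Q.$$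
   Context: For a subset $Q$ of a normed space, $\|\mathbf v\|_Q=\inf\{\sum_j|\lambda_j|:\sum_j\lambda_j\mathbf v_j=\mathbf v,\ \mathbf v_j\in Q\}$ (infimum over finite linear combinations of elements of $Q$), defined on $\mathrm{span}\{Q\}$. $\mathbb I_V$ is the identity of $V$. *)

theory Defs
  imports "HOL-Analysis.Analysis"
begin

definition Qnorm :: "'a::real_vector set \<Rightarrow> 'a \<Rightarrow> real" where
  "Qnorm Q v = Inf {sum_list (map (\<lambda>p. \<bar>fst p\<bar>) ps) | ps.
      set (map snd ps) \<subseteq> Q \<and> sum_list (map (\<lambda>p. fst p *\<^sub>R snd p) ps) = v}"

end

theory Submission
  imports Defs
begin

text \<open>The form \<open>B x y = \<langle>x, y\<rangle> - \<langle>f x, f y\<rangle>\<close> is bilinear and equals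
  \<open>\<langle>x, (I - f\<^sup>* f) y\<rangle>\<close>. On pairs of atoms \<open>u, v \<in> Q\<close> it is bounded by \<open>\<epsilon> M\<^sub>Q\<^sup>2\<close>: by
  polarization, \<open>4 B u v\<close> is the difference of the distortions of \<open>u + v\<close> and \<open>u - v\<close>,
  both of which are differences of atoms because \<open>-Q = Q\<close>, so each distortion is at most
  \<open>\<epsilon> \<parallel>u \<plusminus> v\<parallel>\<^sup>2\<close>, while \<open>\<parallel>u + v\<parallel>\<^sup>2 + \<parallel>u - v\<parallel>\<^sup>2 \<le> 4 M\<^sub>Q\<^sup>2\<close>. A bound on atoms
  propagates to linear combinations with the \<open>\<ell>\<^sub>1\<close>-norm of the coefficients as factor,
  one argument at a time, and taking the infimum over representations gives the atomic
  norms.\<close>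

abbreviation lincomb :: "(real \<times> 'a::real_vector) list \<Rightarrow> 'a" where
  "lincomb ps \<equiv> sum_list (map (\<lambda>p. fst p *\<^sub>R snd p) ps)"

abbreviation coeff_abs_sum :: "(real \<times> 'a) list \<Rightarrow> real" where
  "coeff_abs_sum ps \<equiv> sum_list (map (\<lambda>p. \<bar>fst p\<bar>) ps)"

lemma lincomb_of_span:
  assumes "w \<in> span Q"
  obtains ps where "set (map snd ps) \<subseteq> Q" "lincomb ps = w"
proof -
  obtain t r where t: "finite t" "t \<subseteq> Q" "w = (\<Sum>a\<in>t. r a *\<^sub>R a)"
    using assms unfolding span_explicit by blast
  obtain xs where xs: "set xs = t" "distinct xs"
    using finite_distinct_list[OF t(1)] by blast
  have "lincomb (map (\<lambda>a. (r a, a)) xs) = w"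
    using xs t by (simp add: o_def sum_list_distinct_conv_sum_set)
  then show thesis
    using xs t by (intro that[of "map (\<lambda>a. (r a, a)) xs"]) (auto simp: o_def)
qed

lemma Qnorm_le_coeff_abs_sum:
  assumes "set (map snd ps) \<subseteq> Q" "lincomb ps = w"
  shows "Qnorm Q w \<le> coeff_abs_sum ps"
  unfolding Qnorm_def
proof (rule cInf_lower)
  show "bdd_below {coeff_abs_sum ps | ps. set (map snd ps) \<subseteq> Q \<and> lincomb ps = w}"
    by (rule bdd_belowI[of _ 0]) (auto intro!: sum_list_nonneg)
qed (use assms in blast)

lemma Qnorm_greatest:
  assumes "w \<in> span Q"
    and "\<And>ps. set (map snd ps) \<subseteq> Q \<Longrightarrow> lincomb ps = w \<Longrightarrow> x \<le> coeff_abs_sum ps"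
  shows "x \<le> Qnorm Q w"
  unfolding Qnorm_def
proof (rule cInf_greatest)
  obtain ps where "set (map snd ps) \<subseteq> Q" "lincomb ps = w"
    using lincomb_of_span[OF assms(1)] .
  then show "{coeff_abs_sum ps | ps. set (map snd ps) \<subseteq> Q \<and> lincomb ps = w} \<noteq> {}"
    by blast
qed (use assms(2) in blast)

lemma Qnorm_nonneg: "w \<in> span Q \<Longrightarrow> 0 \<le> Qnorm Q w"
  by (rule Qnorm_greatest) (auto intro!: sum_list_nonneg)

lemma le_mult_Qnorm:
  assumes "w \<in> span Q" "0 \<le> C"
    and le: "\<And>ps. set (map snd ps) \<subseteq> Q \<Longrightarrow> lincomb ps = w \<Longrightarrow> x \<le> C * coeff_abs_sum ps"
  shows "x \<le> C * Qnorm Q w"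
proof (cases "C = 0")
  case True
  obtain ps where "set (map snd ps) \<subseteq> Q" "lincomb ps = w"
    using lincomb_of_span[OF assms(1)] .
  then show ?thesis
    using le True by fastforce
next
  case False
  with assms(2) have "0 < C" by simp
  have "x / C \<le> Qnorm Q w"
    by (rule Qnorm_greatest[OF assms(1)]) (use le \<open>0 < C\<close> in \<open>simp add: divide_le_eq mult.commute\<close>)
  with \<open>0 < C\<close> show ?thesis
    by (simp add: divide_le_eq mult.commute)
qed

lemma abs_linear_lincomb_le:
  fixes g :: "'a::real_vector \<Rightarrow> real"
  assumes "linear g" "\<forall>u\<in>Q. \<bar>g u\<bar> \<le> K" "set (map snd ps) \<subseteq> Q"
  shows "\<bar>g (lincomb ps)\<bar> \<le> K * coeff_abs_sum ps"
  using assms(3)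
proof (induction ps)
  case Nil
  then show ?case
    using linear_0[OF assms(1)] by simp
next
  case (Cons p ps)
  obtain a u where p: "p = (a, u)" by (cases p)
  have "\<bar>a * g u\<bar> \<le> \<bar>a\<bar> * K"
    using assms(2) Cons.prems p by (auto simp: abs_mult intro: mult_left_mono)
  moreover have "\<bar>g (lincomb ps)\<bar> \<le> K * coeff_abs_sum ps"
    using Cons by simp
  ultimately show ?case
    using p by (simp add: linear_add[OF assms(1)] linear_scale[OF assms(1)] algebra_simps)
qed

lemma abs_linear_le_Qnorm:
  fixes g :: "'a::real_vector \<Rightarrow> real"
  assumes "linear g" "\<forall>u\<in>Q. \<bar>g u\<bar> \<le> K" "0 \<le> K" "w \<in> span Q"
  shows "\<bar>g w\<bar> \<le> K * Qnorm Q w"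
  by (rule le_mult_Qnorm[OF assms(4,3)]) (metis abs_linear_lincomb_le[OF assms(1,2)])

lemma abs_bilinear_le_Qnorm:
  fixes B :: "'a::real_vector \<Rightarrow> 'a \<Rightarrow> real"
  assumes "\<And>y. linear (\<lambda>x. B x y)" "\<And>x. linear (B x)"
    and "\<forall>u\<in>Q. \<forall>v\<in>Q. \<bar>B u v\<bar> \<le> K" "0 \<le> K"
    and "w1 \<in> span Q" "w2 \<in> span Q"
  shows "\<bar>B w1 w2\<bar> \<le> K * Qnorm Q w1 * Qnorm Q w2"
proof -
  have "\<forall>v\<in>Q. \<bar>B w1 v\<bar> \<le> K * Qnorm Q w1"
    using abs_linear_le_Qnorm[OF assms(1) _ assms(4,5)] assms(3) by blast
  moreover have "0 \<le> K * Qnorm Q w1"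
    using assms(4) Qnorm_nonneg[OF assms(5)] by simp
  ultimately show ?thesis
    using abs_linear_le_Qnorm[OF assms(2) _ _ assms(6)] by blast
qed

lemma abs_inner_distortion_le:
  fixes f :: "'a::real_inner \<Rightarrow> 'b::real_inner"
  assumes "linear f" "0 \<le> \<epsilon>" "norm u \<le> M" "norm v \<le> M"
    and dist_add: "\<bar>(norm (f (u + v)))\<^sup>2 - (norm (u + v))\<^sup>2\<bar> \<le> \<epsilon> * (norm (u + v))\<^sup>2"
    and dist_diff: "\<bar>(norm (f (u - v)))\<^sup>2 - (norm (u - v))\<^sup>2\<bar> \<le> \<epsilon> * (norm (u - v))\<^sup>2"
  shows "\<bar>inner u v - inner (f u) (f v)\<bar> \<le> \<epsilon> * M\<^sup>2"
proof -
  have polarization: "(norm (x + y))\<^sup>2 - (norm (x - y))\<^sup>2 = 4 * inner x y"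
    and parallelogram: "(norm (x + y))\<^sup>2 + (norm (x - y))\<^sup>2 = 2 * (norm x)\<^sup>2 + 2 * (norm y)\<^sup>2"
    for x y :: "'c::real_inner"
    by (simp_all add: power2_norm_eq_inner inner_add_left inner_add_right inner_diff_left
        inner_diff_right inner_commute)
  have "4 * (inner u v - inner (f u) (f v))
      = ((norm (u + v))\<^sup>2 - (norm (f (u + v)))\<^sup>2) - ((norm (u - v))\<^sup>2 - (norm (f (u - v)))\<^sup>2)"
    using polarization[of u v] polarization[of "f u" "f v"]
    by (simp add: linear_add[OF assms(1)] linear_diff[OF assms(1)])
  also have "\<bar>\<dots>\<bar> \<le> \<epsilon> * ((norm (u + v))\<^sup>2 + (norm (u - v))\<^sup>2)"
    using dist_add dist_diff by (simp add: abs_le_iff algebra_simps)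
  also have "\<dots> \<le> \<epsilon> * (4 * M\<^sup>2)"
    using power_mono[OF assms(3), of 2] power_mono[OF assms(4), of 2] assms(2)
    by (intro mult_left_mono) (simp_all add: parallelogram)
  finally show ?thesis
    by simp
qed

theorem mainTheorem6:
  fixes Q :: "'a::{real_inner, complete_space} set"
    and f :: "'a \<Rightarrow> 'b::euclidean_space"
    and fstar :: "'b \<Rightarrow> 'a"
    and \<epsilon> :: real
  assumes bdd: "bdd_above (norm ` Q)"
    and symm: "uminus ` Q = Q"
    and eps: "\<epsilon> > 0"
    and lin: "linear f"
    and JL: "\<forall>v1\<in>Q. \<forall>v2\<in>Q.
        (1 - \<epsilon>) * (norm (v1 - v2))\<^sup>2 \<le> (norm (f v1 - f v2))\<^sup>2 \<and>
        (norm (f v1 - f v2))\<^sup>2 \<le> (1 + \<epsilon>) * (norm (v1 - v2))\<^sup>2"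
    and adj: "\<forall>x y. inner (f x) y = inner x (fstar y)"
  shows "\<forall>w1\<in>span Q. \<forall>w2\<in>span Q.
     \<bar>inner w1 (w2 - fstar (f w2))\<bar>
       \<le> \<epsilon> * (Sup (norm ` Q))\<^sup>2 * Qnorm Q w1 * Qnorm Q w2"
proof (intro ballI)
  fix w1 w2 assume w1: "w1 \<in> span Q" and w2: "w2 \<in> span Q"
  define B where "B x y = inner x y - inner (f x) (f y)" for x y
  have "inner w1 (w2 - fstar (f w2)) = B w1 w2"
    using adj by (simp add: B_def inner_diff_right)
  moreover have "linear (\<lambda>x. B x y)" "linear (B x)" for x y
    using lin by (auto intro!: linearI simp: B_def linear_add linear_scale
        inner_add_left inner_add_right algebra_simps)
  moreover have "\<forall>u\<in>Q. \<forall>v\<in>Q. \<bar>B u v\<bar> \<le> \<epsilon> * (Sup (norm ` Q))\<^sup>2"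
  proof (intro ballI)
    fix u v assume u: "u \<in> Q" and v: "v \<in> Q"
    then have "- v \<in> Q"
      using symm by force
    have "f u - f (- v) = f (u + v)" "f u - f v = f (u - v)"
      using lin by (simp_all add: linear_diff linear_neg linear_add)
    then have "(1 - \<epsilon>) * (norm (u + v))\<^sup>2 \<le> (norm (f (u + v)))\<^sup>2 \<and>
        (norm (f (u + v)))\<^sup>2 \<le> (1 + \<epsilon>) * (norm (u + v))\<^sup>2"
      and "(1 - \<epsilon>) * (norm (u - v))\<^sup>2 \<le> (norm (f (u - v)))\<^sup>2 \<and>
        (norm (f (u - v)))\<^sup>2 \<le> (1 + \<epsilon>) * (norm (u - v))\<^sup>2"
      using JL[rule_format, OF u \<open>- v \<in> Q\<close>] JL[rule_format, OF u v] by simp_all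
    then have "\<bar>(norm (f (u + v)))\<^sup>2 - (norm (u + v))\<^sup>2\<bar> \<le> \<epsilon> * (norm (u + v))\<^sup>2"
      and "\<bar>(norm (f (u - v)))\<^sup>2 - (norm (u - v))\<^sup>2\<bar> \<le> \<epsilon> * (norm (u - v))\<^sup>2"
      by (simp_all add: abs_le_iff left_diff_distrib distrib_right)
    moreover have "norm u \<le> Sup (norm ` Q)" "norm v \<le> Sup (norm ` Q)"
      using bdd u v by (auto intro: cSup_upper)
    ultimately show "\<bar>B u v\<bar> \<le> \<epsilon> * (Sup (norm ` Q))\<^sup>2"
      unfolding B_def using abs_inner_distortion_le lin eps by (metis less_imp_le)
  qed
  ultimately show "\<bar>inner w1 (w2 - fstar (f w2))\<bar>
      \<le> \<epsilon> * (Sup (norm ` Q))\<^sup>2 * Qnorm Q w1 * Qnorm Q w2"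
    using abs_bilinear_le_Qnorm[OF _ _ _ _ w1 w2] eps by simp
qed

end
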